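(* Write $\mathbb Z_2=\{1,\tau\}$ and let $\tau$ act on $\mathbb Z^n$ by $\tau\cdot\lambda=-\lambda$; form the semidirect product $\mathbb Z^n\rtimes\mathbb Z_2$, whose elements are written $\lambda\cdot x$ with $\lambda\in\mathbb Z^n$, $x\in\mathbb Z_2$. Let $e_1,\dots,e_n$ be the standard basis of $\mathbb Z^n$, and set $L_n^\circ=\{\lambda\cdot1 : \sum_i\lambda_i=0\}$ and $L_n^\tau=\{\lambda\cdot\tau:\sum_i\lambda_i=1\}$. Then: (1) The assignment $g_i\mapsto e_i\cdot\tau$ defines an injective group morphism $L_n\to\mathbb Z^n\rtimes\mathbb Z_2$. (2) Its image is $L_n^\circ\cup L_n^\tau$. (3) $L_n\cong\mathbb Z^{n-1}\rtimes\mathbb Z_2$, where $\mathbb Z_2$ acts on $\mathbb Z^{n-1}$ by $\lambda\mapsto-\lambda$.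
   Context: $L_n=\mathbb Z_2^{*n}/\langle abc=cba \mid a,b,c\in\{g_1,\dots,g_n\}\rangle$, where $g_1,\dots,g_n$ (with $g_i^2=1$) are the standard generators of the free product $\mathbb Z_2^{*n}$; we keep the notation $g_i$ for their images in $L_n$. $L_n$ is the diagonal group of $A_o^*(n)$, i.e. $C^*(L_n)=A_o^*(n)/\langle u_{ij}=0,\ i\ne j\rangle$ with $g_i$ the image of $u_{ii}$. *)

theory Defs
  imports "HOL-Algebra.Group"
begin

text \<open>Words in the generators g_0,...,g_(n-1) are lists of indices below n
(g_i is represented by the letter i; since g_i^2 = 1 every g_i is its own inverse,
so positive words suffice).\<close>

definition words :: "nat \<Rightarrow> nat list set" where
  "words n = {w. set w \<subseteq> {..<n}}"

inductive Lrel :: "nat \<Rightarrow> nat list \<Rightarrow> nat list \<Rightarrow> bool" for n :: nat where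
  refl: "w \<in> words n \<Longrightarrow> Lrel n w w"
| sym: "Lrel n w v \<Longrightarrow> Lrel n v w"
| trans: "Lrel n u v \<Longrightarrow> Lrel n v w \<Longrightarrow> Lrel n u w"
| square: "u \<in> words n \<Longrightarrow> v \<in> words n \<Longrightarrow> i < n \<Longrightarrow> Lrel n (u @ [i, i] @ v) (u @ v)"
| braid: "u \<in> words n \<Longrightarrow> v \<in> words n \<Longrightarrow> a < n \<Longrightarrow> b < n \<Longrightarrow> c < n \<Longrightarrow>
          Lrel n (u @ [a, b, c] @ v) (u @ [c, b, a] @ v)"

definition Lclass :: "nat \<Rightarrow> nat list \<Rightarrow> nat list set" where
  "Lclass n w = {v. Lrel n w v}"

definition L_grp :: "nat \<Rightarrow> nat list set monoid" where
  "L_grp n = \<lparr> carrier = Lclass n ` words n,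
               mult = (\<lambda>X Y. {w. \<exists>x\<in>X. \<exists>y\<in>Y. Lrel n (x @ y) w}),
               one = Lclass n [] \<rparr>"

definition gen :: "nat \<Rightarrow> nat \<Rightarrow> nat list set" where
  "gen n i = Lclass n [i]"

text \<open>Elements of Z^n are functions nat \<Rightarrow> int vanishing outside {..<n};
Z_2 = {1, \<tau>} is represented by bool, with False = 1 and True = \<tau>.
\<tau> acts on Z^n by negation, so (\<lambda>,x)(\<mu>,y) = (\<lambda> + x\<cdot>\<mu>, xy).\<close>

definition act :: "bool \<Rightarrow> (nat \<Rightarrow> int) \<Rightarrow> (nat \<Rightarrow> int)" where
  "act x m = (if x then (\<lambda>i. - m i) else m)"

definition sdp :: "nat \<Rightarrow> ((nat \<Rightarrow> int) \<times> bool) monoid" where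
  "sdp n = \<lparr> carrier = {(l, x). \<forall>i\<ge>n. l i = 0},
             mult = (\<lambda>(l, x) (m, y). (\<lambda>i. l i + act x m i, x \<noteq> y)),
             one = (\<lambda>i. 0, False) \<rparr>"

definition ebasis :: "nat \<Rightarrow> nat \<Rightarrow> int" where
  "ebasis i = (\<lambda>j. if j = i then 1 else 0)"

definition Lcirc :: "nat \<Rightarrow> ((nat \<Rightarrow> int) \<times> bool) set" where
  "Lcirc n = {(l, x). (\<forall>i\<ge>n. l i = 0) \<and> x = False \<and> (\<Sum>i<n. l i) = 0}"

definition Ltau :: "nat \<Rightarrow> ((nat \<Rightarrow> int) \<times> bool) set" where
  "Ltau n = {(l, x). (\<forall>i\<ge>n. l i = 0) \<and> x = True \<and> (\<Sum>i<n. l i) = 1}"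

end

theory Submission
  imports Defs
begin

text \<open>
  Existence of the morphism is checked on words: the image of a word is invariant under the
  defining relations.  For injectivity and the image we use a normal form.  Put c = n - 1 and
  t_i = g_i g_c.  The braid relation gives t_a t_b = g_a g_c g_b g_c = g_b g_c g_a g_c = t_b t_a,
  so the t_i commute, and t_c = 1.  Right multiplication by g_a maps
  t_0^(mu_0) ... t_(c-1)^(mu_(c-1)) g_c^x to a word of the same shape (with mu_a changed by one
  and x flipped), so by induction on words every element of L_n has such a normal form.  The
  morphism sends this normal form to the vector with coordinates mu_0, ..., mu_(c-1) and last
  coordinate x - (mu_0 + ... + mu_(c-1)), together with x.  Forgetting the last coordinate
  recovers (mu, x) and hence the element; this yields injectivity, the description of the image
  and the isomorphism with Z^(n-1) \<rtimes> Z_2 at once.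
\<close>

section \<open>The presented group L_n\<close>

text \<open>The relation Lrel n is a congruence for concatenation, so the classes form a group;
  the inverse of a word is its reversal.\<close>

lemma Lrel_words: "Lrel n w v \<Longrightarrow> w \<in> words n \<and> v \<in> words n"
  by (induction rule: Lrel.induct) (auto simp: words_def)

lemma words_append [simp]: "u @ v \<in> words n \<longleftrightarrow> u \<in> words n \<and> v \<in> words n"
  by (auto simp: words_def)

lemma Lrel_append_left: "Lrel n w v \<Longrightarrow> u \<in> words n \<Longrightarrow> Lrel n (u @ w) (u @ v)"
proof (induction rule: Lrel.induct)
  case (square x y i)
  then show ?case using Lrel.square[of "u @ x" n y i] by simp
next
  case (braid x y a b c)
  then show ?case using Lrel.braid[of "u @ x" n y a b c] by simp
qed (auto intro: Lrel.intros)

lemma Lrel_append_right: "Lrel n w v \<Longrightarrow> u \<in> words n \<Longrightarrow> Lrel n (w @ u) (v @ u)"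
proof (induction rule: Lrel.induct)
  case (square x y i)
  then show ?case using Lrel.square[of x n "y @ u" i] by simp
next
  case (braid x y a b c)
  then show ?case using Lrel.braid[of x n "y @ u" a b c] by simp
qed (auto intro: Lrel.intros)

lemma Lrel_append: "Lrel n w w' \<Longrightarrow> Lrel n v v' \<Longrightarrow> Lrel n (w @ v) (w' @ v')"
  by (meson Lrel.trans Lrel_append_left Lrel_append_right Lrel_words)

lemma Lclass_eqI: "Lrel n w v \<Longrightarrow> Lclass n w = Lclass n v"
  unfolding Lclass_def by (auto intro: Lrel.trans Lrel.sym)

lemma L_carrier: "carrier (L_grp n) = Lclass n ` words n"
  by (simp add: L_grp_def)

lemma L_one: "\<one>\<^bsub>L_grp n\<^esub> = Lclass n []"
  by (simp add: L_grp_def)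

lemma L_mult_Lclass:
  "w \<in> words n \<Longrightarrow> v \<in> words n \<Longrightarrow> Lclass n w \<otimes>\<^bsub>L_grp n\<^esub> Lclass n v = Lclass n (w @ v)"
  unfolding L_grp_def Lclass_def by (auto intro: Lrel.refl Lrel.trans Lrel_append)

text \<open>Since every generator is an involution, the reversed word is a left inverse.\<close>

lemma Lrel_rev_cancel: "w \<in> words n \<Longrightarrow> Lrel n (rev w @ w) []"
proof (induction w)
  case Nil
  then show ?case by (auto intro: Lrel.refl simp: words_def)
next
  case (Cons a w)
  have w: "w \<in> words n" "rev w \<in> words n" "a < n"
    using Cons.prems by (auto simp: words_def)
  have "Lrel n (rev w @ [a, a] @ w) (rev w @ w)"
    using Lrel.square[OF w(2) w(1) w(3)] .
  then show ?case using Cons w by (auto intro: Lrel.trans)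
qed

lemma group_L: "group (L_grp n)"
proof (rule groupI)
  show "\<one>\<^bsub>L_grp n\<^esub> \<in> carrier (L_grp n)"
    by (auto simp: L_carrier L_one words_def)
next
  fix x y assume "x \<in> carrier (L_grp n)" "y \<in> carrier (L_grp n)"
  then show "x \<otimes>\<^bsub>L_grp n\<^esub> y \<in> carrier (L_grp n)"
    by (auto simp: L_carrier L_mult_Lclass)
next
  fix x y z assume "x \<in> carrier (L_grp n)" "y \<in> carrier (L_grp n)" "z \<in> carrier (L_grp n)"
  then show "x \<otimes>\<^bsub>L_grp n\<^esub> y \<otimes>\<^bsub>L_grp n\<^esub> z = x \<otimes>\<^bsub>L_grp n\<^esub> (y \<otimes>\<^bsub>L_grp n\<^esub> z)"
    by (auto simp: L_carrier L_mult_Lclass)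
next
  fix x assume "x \<in> carrier (L_grp n)"
  then show "\<one>\<^bsub>L_grp n\<^esub> \<otimes>\<^bsub>L_grp n\<^esub> x = x"
    by (auto simp: L_carrier L_one L_mult_Lclass[of "[]", simplified] words_def)
next
  fix x assume "x \<in> carrier (L_grp n)"
  then obtain w where w: "w \<in> words n" "x = Lclass n w"
    by (auto simp: L_carrier)
  then have "rev w \<in> words n" by (auto simp: words_def)
  with w show "\<exists>y\<in>carrier (L_grp n). y \<otimes>\<^bsub>L_grp n\<^esub> x = \<one>\<^bsub>L_grp n\<^esub>"
    by (auto simp: L_carrier L_one L_mult_Lclass intro!: bexI[of _ "Lclass n (rev w)"]
        Lclass_eqI Lrel_rev_cancel)
qed

interpretation L: group "L_grp n" for n
  by (rule group_L)

lemma gen_carrier: "i < n \<Longrightarrow> gen n i \<in> carrier (L_grp n)"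
  by (auto simp: gen_def L_carrier words_def)

lemma gen_square: "i < n \<Longrightarrow> gen n i \<otimes>\<^bsub>L_grp n\<^esub> gen n i = \<one>\<^bsub>L_grp n\<^esub>"
  using Lrel.square[of "[]" n "[]" i]
  by (auto simp: gen_def L_mult_Lclass words_def L_one intro!: Lclass_eqI)

lemma gen_inv: "i < n \<Longrightarrow> inv\<^bsub>L_grp n\<^esub> (gen n i) = gen n i"
  by (simp add: L.inv_equality gen_carrier gen_square)

lemma gen_braid: "a < n \<Longrightarrow> b < n \<Longrightarrow> c < n \<Longrightarrow>
  gen n a \<otimes>\<^bsub>L_grp n\<^esub> gen n b \<otimes>\<^bsub>L_grp n\<^esub> gen n c
  = gen n c \<otimes>\<^bsub>L_grp n\<^esub> gen n b \<otimes>\<^bsub>L_grp n\<^esub> gen n a"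
  using Lrel.braid[of "[]" n "[]" a b c]
  by (auto simp: gen_def L_mult_Lclass words_def intro!: Lclass_eqI)

lemma Lclass_snoc: "w \<in> words n \<Longrightarrow> a < n \<Longrightarrow>
  Lclass n (w @ [a]) = Lclass n w \<otimes>\<^bsub>L_grp n\<^esub> gen n a"
  by (simp add: gen_def L_mult_Lclass words_def)

section \<open>The semidirect product and the morphism L_n \<rightarrow> Z^n \<rtimes> Z_2\<close>

lemma sdp_carrier: "carrier (sdp n) = {(l, x). \<forall>i\<ge>n. l i = 0}"
  by (simp add: sdp_def)

lemma sdp_mult: "(l, x) \<otimes>\<^bsub>sdp n\<^esub> (m, y) = (\<lambda>i. l i + act x m i, x \<noteq> y)"
  by (simp add: sdp_def)

lemma sdp_one: "\<one>\<^bsub>sdp n\<^esub> = (\<lambda>i. 0, False)"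
  by (simp add: sdp_def)

lemma sdp_mult_indep: "mult (sdp n) = mult (sdp 0)"
  by (simp add: sdp_def)

lemma sdp_assoc: "x \<otimes>\<^bsub>sdp n\<^esub> y \<otimes>\<^bsub>sdp n\<^esub> z = x \<otimes>\<^bsub>sdp n\<^esub> (y \<otimes>\<^bsub>sdp n\<^esub> z)"
  by (cases x; cases y; cases z) (auto simp: sdp_def act_def fun_eq_iff)

lemma sdp_left_one: "\<one>\<^bsub>sdp n\<^esub> \<otimes>\<^bsub>sdp n\<^esub> x = x"
  by (cases x) (auto simp: sdp_def act_def)

lemma group_sdp: "group (sdp n)"
proof (rule groupI)
  fix x assume x: "x \<in> carrier (sdp n)"
  obtain l b where "x = (l, b)" by (cases x)
  show "\<exists>y\<in>carrier (sdp n). y \<otimes>\<^bsub>sdp n\<^esub> x = \<one>\<^bsub>sdp n\<^esub>"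
  proof
    show "(act b (\<lambda>i. - l i), b) \<otimes>\<^bsub>sdp n\<^esub> x = \<one>\<^bsub>sdp n\<^esub>"
      using \<open>x = (l, b)\<close> by (auto simp: sdp_def act_def)
    show "(act b (\<lambda>i. - l i), b) \<in> carrier (sdp n)"
      using x \<open>x = (l, b)\<close> by (auto simp: sdp_def act_def)
  qed
qed (auto simp: sdp_carrier sdp_one sdp_assoc sdp_left_one sdp_def act_def)

interpretation S: group "sdp n" for n
  by (rule group_sdp)

lemma sdp_translation_pow:
  assumes "(v, False) \<in> carrier (sdp n)"
  shows "(v, False) [^]\<^bsub>sdp n\<^esub> (k::int) = (\<lambda>i. k * v i, False)"
proof -
  have nat_pow: "(v, False) [^]\<^bsub>sdp n\<^esub> (m::nat) = (\<lambda>i. int m * v i, False)" for m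
    by (induction m) (auto simp: sdp_def act_def algebra_simps)
  show ?thesis
  proof (cases "k < 0")
    case True
    have "inv\<^bsub>sdp n\<^esub> (\<lambda>i. int (nat (- k)) * v i, False) = (\<lambda>i. k * v i, False)"
      using True assms by (intro S.inv_equality) (auto simp: sdp_def act_def algebra_simps)
    with True show ?thesis by (simp add: int_pow_def2 nat_pow)
  qed (simp add: int_pow_def2 nat_pow)
qed

text \<open>The image of a word under g_i \<mapsto> e_i \<tau>; it respects both defining relations, since
  (e_i \<tau>)^2 = 1 and (e_a \<tau>)(e_b \<tau>)(e_c \<tau>) = (e_a - e_b + e_c) \<tau> is symmetric in a and c.\<close>

primrec word_image :: "nat list \<Rightarrow> (nat \<Rightarrow> int) \<times> bool" where
  "word_image [] = \<one>\<^bsub>sdp 0\<^esub>"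
| "word_image (a # w) = (ebasis a, True) \<otimes>\<^bsub>sdp 0\<^esub> word_image w"

lemma word_image_append: "word_image (w @ v) = word_image w \<otimes>\<^bsub>sdp 0\<^esub> word_image v"
  by (induction w) (simp_all add: sdp_left_one sdp_assoc)

lemma word_image_Lrel: "Lrel n w v \<Longrightarrow> word_image w = word_image v"
proof (induction rule: Lrel.induct)
  case (square u v i)
  have "word_image [i, i] = \<one>\<^bsub>sdp 0\<^esub>"
    by (simp add: sdp_def act_def ebasis_def fun_eq_iff)
  then show ?case by (simp only: word_image_append sdp_left_one)
next
  case (braid u v a b c)
  have "word_image [a, b, c] = word_image [c, b, a]"
    by (simp add: sdp_def act_def ebasis_def fun_eq_iff)
  then show ?case by (simp only: word_image_append)
qed auto

lemma word_image_carrier: "w \<in> words n \<Longrightarrow> word_image w \<in> carrier (sdp n)"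
  by (induction w) (auto simp: words_def sdp_def act_def ebasis_def)

definition L_to_sdp :: "nat list set \<Rightarrow> (nat \<Rightarrow> int) \<times> bool" where
  "L_to_sdp X = word_image (SOME w. w \<in> X)"

lemma L_to_sdp_Lclass: "w \<in> words n \<Longrightarrow> L_to_sdp (Lclass n w) = word_image w"
proof -
  assume "w \<in> words n"
  then have "w \<in> Lclass n w" by (simp add: Lclass_def Lrel.refl)
  then have "Lrel n w (SOME v. v \<in> Lclass n w)"
    by (metis (mono_tags) Lclass_def mem_Collect_eq someI)
  then show ?thesis unfolding L_to_sdp_def by (metis word_image_Lrel)
qed

lemma L_to_sdp_hom: "L_to_sdp \<in> hom (L_grp n) (sdp n)"
proof (rule homI)
  fix x assume "x \<in> carrier (L_grp n)"
  then show "L_to_sdp x \<in> carrier (sdp n)"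
    by (auto simp: L_carrier L_to_sdp_Lclass word_image_carrier)
next
  fix x y assume "x \<in> carrier (L_grp n)" "y \<in> carrier (L_grp n)"
  then obtain w v where "w \<in> words n" "v \<in> words n" "x = Lclass n w" "y = Lclass n v"
    by (auto simp: L_carrier)
  then show "L_to_sdp (x \<otimes>\<^bsub>L_grp n\<^esub> y) = L_to_sdp x \<otimes>\<^bsub>sdp n\<^esub> L_to_sdp y"
    by (simp add: L_mult_Lclass L_to_sdp_Lclass word_image_append sdp_mult_indep[of n])
qed

lemma L_to_sdp_gen: "i < n \<Longrightarrow> L_to_sdp (gen n i) = (ebasis i, True)"
  by (simp add: gen_def L_to_sdp_Lclass words_def sdp_def act_def)

section \<open>Ordered products of commuting elements\<close>

lemma (in group) commutes_int_pow:
  assumes comm: "x \<otimes> y = y \<otimes> x" and x: "x \<in> carrier G" and y: "y \<in> carrier G"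
  shows "x [^] (k::int) \<otimes> y = y \<otimes> x [^] k"
proof -
  have nat_pow: "x [^] (m::nat) \<otimes> y = y \<otimes> x [^] m" for m
    using group_commutes_pow[OF comm x y] .
  have inv_comm: "inv a \<otimes> y = y \<otimes> inv a" if a: "a \<in> carrier G" "a \<otimes> y = y \<otimes> a" for a
  proof -
    have "inv a \<otimes> y = inv a \<otimes> (y \<otimes> a) \<otimes> inv a"
      using a(1) y by (simp add: m_assoc)
    also have "\<dots> = inv a \<otimes> (a \<otimes> y) \<otimes> inv a"
      by (simp only: a(2))
    also have "\<dots> = y \<otimes> inv a"
      using a(1) y by (simp add: m_assoc[symmetric])
    finally show ?thesis .
  qed
  show ?thesis
  proof (cases "k < 0")
    case True
    then have "x [^] k = inv (x [^] nat (- k))"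
      using int_pow_neg[OF x, of "- k"] pow_nat[of "- k" G x] by simp
    then show ?thesis
      using inv_comm[OF nat_pow_closed[OF x] nat_pow] by simp
  next
    case False
    then have "x [^] k = x [^] nat k"
      by (simp add: pow_nat)
    then show ?thesis
      using nat_pow by simp
  qed
qed

primrec ordered_prod :: "('a, 'b) monoid_scheme \<Rightarrow> (nat \<Rightarrow> 'a) \<Rightarrow> (nat \<Rightarrow> int) \<Rightarrow> nat \<Rightarrow> 'a"
  where
    "ordered_prod G t \<mu> 0 = \<one>\<^bsub>G\<^esub>"
  | "ordered_prod G t \<mu> (Suc j) = ordered_prod G t \<mu> j \<otimes>\<^bsub>G\<^esub> t j [^]\<^bsub>G\<^esub> \<mu> j"

lemma ordered_prod_cong: "(\<And>j. j < m \<Longrightarrow> \<mu> j = \<nu> j) \<Longrightarrow> ordered_prod G t \<mu> m = ordered_prod G t \<nu> m"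
  by (induction m) auto

lemma (in group) ordered_prod_closed:
  "(\<And>j. j < m \<Longrightarrow> t j \<in> carrier G) \<Longrightarrow> ordered_prod G t \<mu> m \<in> carrier G"
  by (induction m) auto

lemma (in group) ordered_prod_mult_factor:
  assumes t: "\<And>j. j < m \<Longrightarrow> t j \<in> carrier G"
    and comm: "\<And>j k. j < m \<Longrightarrow> k < m \<Longrightarrow> t j \<otimes> t k = t k \<otimes> t j"
    and a: "a < m"
  shows "ordered_prod G t \<mu> m \<otimes> t a = ordered_prod G t (\<mu>(a := \<mu> a + 1)) m"
  using t comm a
proof (induction m)
  case (Suc j)
  let ?P = "ordered_prod G t \<mu> j" and ?p = "t j [^] \<mu> j"
  have c: "?P \<in> carrier G" "t a \<in> carrier G" "t j \<in> carrier G"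
    using Suc.prems by (auto intro: ordered_prod_closed)
  show ?case
  proof (cases "a = j")
    case True
    have "ordered_prod G t (\<mu>(a := \<mu> a + 1)) (Suc j)
        = ordered_prod G t (\<mu>(a := \<mu> a + 1)) j \<otimes> t j [^] (\<mu> j + 1)"
      using True by simp
    also have "ordered_prod G t (\<mu>(a := \<mu> a + 1)) j = ?P"
      using True by (intro ordered_prod_cong) auto
    also have "t j [^] (\<mu> j + 1) = ?p \<otimes> t j"
      using c by (simp add: int_pow_mult)
    finally show ?thesis
      using True c by (simp add: m_assoc)
  next
    case False
    have "?p \<otimes> t a = t a \<otimes> ?p"
      using Suc.prems False c by (intro commutes_int_pow) auto
    then have "?P \<otimes> ?p \<otimes> t a = ?P \<otimes> t a \<otimes> ?p"
      using c by (simp add: m_assoc)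
    also have "?P \<otimes> t a = ordered_prod G t (\<mu>(a := \<mu> a + 1)) j"
      using Suc False by (simp add: fun_upd_def)
    finally show ?thesis
      using False by (simp add: fun_upd_def)
  qed
qed simp

lemma ordered_prod_hom:
  assumes "group G" "group H" "h \<in> hom G H" "\<And>j. j < m \<Longrightarrow> t j \<in> carrier G"
  shows "h (ordered_prod G t \<mu> m) = ordered_prod H (h \<circ> t) \<mu> m"
  using assms(4)
proof (induction m)
  case 0
  show ?case using assms by (simp add: hom_one)
next
  case (Suc m)
  then show ?case
    using assms by (simp add: hom_mult group.ordered_prod_closed hom_int_pow group.int_pow_closed)
qed

lemma sum_ebasis: "(\<Sum>j<m. f j * ebasis j i) = (if i < m then f i else 0)"
  by (simp add: ebasis_def if_distrib[of "\<lambda>t. _ * t"] sum.delta[of _ i] eq_commute[of i] cong: if_cong)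

lemma sdp_ordered_prod_translations:
  assumes "\<And>j. j < m \<Longrightarrow> t j = (w j, False)" "\<And>j. j < m \<Longrightarrow> t j \<in> carrier (sdp n)"
  shows "ordered_prod (sdp n) t \<mu> m = (\<lambda>i. \<Sum>j<m. \<mu> j * w j i, False)"
  using assms
proof (induction m)
  case (Suc m)
  then show ?case
    by (simp add: sdp_translation_pow sdp_mult act_def)
qed (simp add: sdp_one)

definition lift :: "nat \<Rightarrow> (nat \<Rightarrow> int) \<Rightarrow> bool \<Rightarrow> (nat \<Rightarrow> int) \<times> bool" where
  "lift n \<mu> x = (\<lambda>i. if i < n - 1 then \<mu> i
                     else if i = n - 1 then of_bool x - (\<Sum>j<n - 1. \<mu> j) else 0, x)"

text \<open>The projection Z^n \<rtimes> Z_2 \<rightarrow> Z^(n-1) \<rtimes> Z_2 forgetting the last coordinate; it is a morphism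
  because the Z_2-action is coordinatewise.\<close>

definition forget_last :: "nat \<Rightarrow> (nat \<Rightarrow> int) \<times> bool \<Rightarrow> (nat \<Rightarrow> int) \<times> bool" where
  "forget_last n p = (\<lambda>i. if i < n - 1 then fst p i else 0, snd p)"

lemma forget_last_hom: "forget_last n \<in> hom (sdp n) (sdp (n - 1))"
proof (rule homI)
  fix p q assume "p \<in> carrier (sdp n)" "q \<in> carrier (sdp n)"
  then show "forget_last n (p \<otimes>\<^bsub>sdp n\<^esub> q) = forget_last n p \<otimes>\<^bsub>sdp (n - 1)\<^esub> forget_last n q"
    by (cases p; cases q) (auto simp: forget_last_def sdp_def act_def fun_eq_iff)
qed (auto simp: forget_last_def sdp_def)

section \<open>The normal form in L_n\<close>

definition translation :: "nat \<Rightarrow> nat \<Rightarrow> nat list set" where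
  "translation n i = gen n i \<otimes>\<^bsub>L_grp n\<^esub> gen n (n - 1)"

definition normal_form :: "nat \<Rightarrow> (nat \<Rightarrow> int) \<Rightarrow> bool \<Rightarrow> nat list set" where
  "normal_form n \<mu> x = ordered_prod (L_grp n) (translation n) \<mu> (n - 1)
     \<otimes>\<^bsub>L_grp n\<^esub> (if x then gen n (n - 1) else \<one>\<^bsub>L_grp n\<^esub>)"

context
  fixes n c :: nat
  assumes n_eq: "n = Suc c"
begin

lemma last_lt: "c < n"
  using n_eq by simp

lemma pred_eq: "n - Suc 0 = c"
  using n_eq by simp

lemma forget_last_lift: "forget_last n (lift n \<mu> x) = (\<lambda>i. if i < c then \<mu> i else 0, x)"
  by (simp add: forget_last_def lift_def pred_eq fun_eq_iff)

lemma lift_eq: "lift n \<mu> x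
    = (\<lambda>i. if i < c then \<mu> i else if i = c then of_bool x - (\<Sum>j<c. \<mu> j) else 0, x)"
  by (simp add: lift_def n_eq fun_eq_iff)

lemma translation_eq: "translation n i = gen n i \<otimes>\<^bsub>L_grp n\<^esub> gen n c"
  by (simp add: translation_def n_eq)

lemma normal_form_eq: "normal_form n \<mu> x = ordered_prod (L_grp n) (translation n) \<mu> c
     \<otimes>\<^bsub>L_grp n\<^esub> (if x then gen n c else \<one>\<^bsub>L_grp n\<^esub>)"
  by (simp add: normal_form_def n_eq)

lemma translation_carrier: "i < n \<Longrightarrow> translation n i \<in> carrier (L_grp n)"
  by (simp add: translation_eq gen_carrier last_lt)

lemma translation_last: "translation n c = \<one>\<^bsub>L_grp n\<^esub>"
  by (simp add: translation_eq gen_square last_lt)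

text \<open>The braid relation makes the translations commute: g_a g_c g_b g_c = g_b g_c g_a g_c.\<close>

lemma translation_comm:
  assumes "a < n" "b < n"
  shows "translation n a \<otimes>\<^bsub>L_grp n\<^esub> translation n b = translation n b \<otimes>\<^bsub>L_grp n\<^esub> translation n a"
proof -
  have "gen n a \<otimes>\<^bsub>L_grp n\<^esub> gen n c \<otimes>\<^bsub>L_grp n\<^esub> gen n b
      = gen n b \<otimes>\<^bsub>L_grp n\<^esub> gen n c \<otimes>\<^bsub>L_grp n\<^esub> gen n a"
    using assms last_lt by (simp add: gen_braid)
  then have "gen n a \<otimes>\<^bsub>L_grp n\<^esub> gen n c \<otimes>\<^bsub>L_grp n\<^esub> gen n b \<otimes>\<^bsub>L_grp n\<^esub> gen n c
      = gen n b \<otimes>\<^bsub>L_grp n\<^esub> gen n c \<otimes>\<^bsub>L_grp n\<^esub> gen n a \<otimes>\<^bsub>L_grp n\<^esub> gen n c"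
    by simp
  with assms last_lt show ?thesis
    by (simp add: translation_eq gen_carrier L.m_assoc)
qed

lemma translation_prod_carrier: "ordered_prod (L_grp n) (translation n) \<mu> c \<in> carrier (L_grp n)"
  using last_lt by (intro L.ordered_prod_closed translation_carrier) simp

lemma normal_form_carrier: "normal_form n \<mu> x \<in> carrier (L_grp n)"
  by (simp add: normal_form_eq translation_prod_carrier gen_carrier last_lt)

lemma translation_prod_mult:
  assumes a: "a < n"
  shows "ordered_prod (L_grp n) (translation n) \<mu> c \<otimes>\<^bsub>L_grp n\<^esub> translation n a
    = ordered_prod (L_grp n) (translation n) (\<mu>(a := \<mu> a + 1)) c"
proof (cases "a < c")
  case True
  show ?thesis
  proof (rule L.ordered_prod_mult_factor)
    show "\<And>j. j < c \<Longrightarrow> translation n j \<in> carrier (L_grp n)"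
      using last_lt by (simp add: translation_carrier)
    show "\<And>j k. j < c \<Longrightarrow> k < c \<Longrightarrow>
        translation n j \<otimes>\<^bsub>L_grp n\<^esub> translation n k = translation n k \<otimes>\<^bsub>L_grp n\<^esub> translation n j"
      using last_lt by (simp add: translation_comm)
  qed (rule True)
next
  case False
  then have "a = c" using a n_eq by simp
  then show ?thesis
    by (simp add: translation_last translation_prod_carrier cong: ordered_prod_cong)
qed

lemma translation_prod_mult_inv:
  assumes a: "a < n"
  shows "ordered_prod (L_grp n) (translation n) \<mu> c \<otimes>\<^bsub>L_grp n\<^esub> inv\<^bsub>L_grp n\<^esub> (translation n a)
    = ordered_prod (L_grp n) (translation n) (\<mu>(a := \<mu> a - 1)) c"
proof -
  let ?P = "ordered_prod (L_grp n) (translation n)"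
  let ?\<nu> = "\<mu>(a := \<mu> a - 1)"
  have "?P ?\<nu> c \<otimes>\<^bsub>L_grp n\<^esub> translation n a = ?P \<mu> c"
    using translation_prod_mult[OF a, of ?\<nu>] by simp
  then have "?P \<mu> c \<otimes>\<^bsub>L_grp n\<^esub> inv\<^bsub>L_grp n\<^esub> (translation n a)
      = ?P ?\<nu> c \<otimes>\<^bsub>L_grp n\<^esub> translation n a \<otimes>\<^bsub>L_grp n\<^esub> inv\<^bsub>L_grp n\<^esub> (translation n a)"
    by (simp only:)
  also have "\<dots> = ?P ?\<nu> c"
    using translation_prod_carrier translation_carrier[OF a] by (simp add: L.m_assoc)
  finally show ?thesis .
qed

text \<open>Normal forms are stable under right multiplication by generators: for x = 0 use
  g_a = t_a g_c, and for x = 1 use g_c g_a = t_a^(-1).\<close>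

lemma normal_form_mult_gen:
  assumes a: "a < n"
  shows "normal_form n \<mu> x \<otimes>\<^bsub>L_grp n\<^esub> gen n a
    = normal_form n (\<mu>(a := \<mu> a + (if x then -1 else 1))) (\<not> x)"
proof (cases x)
  case False
  have "gen n a = translation n a \<otimes>\<^bsub>L_grp n\<^esub> gen n c"
    using a last_lt by (simp add: translation_eq gen_carrier gen_square L.m_assoc)
  with False a last_lt show ?thesis
    by (simp add: normal_form_eq translation_prod_carrier gen_carrier translation_carrier
        L.m_assoc[symmetric] translation_prod_mult)
next
  case True
  have "gen n c \<otimes>\<^bsub>L_grp n\<^esub> gen n a = inv\<^bsub>L_grp n\<^esub> (translation n a)"
    using a last_lt by (simp add: translation_eq gen_carrier gen_inv L.inv_mult_group)
  with True a last_lt show ?thesis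
    by (simp add: normal_form_eq translation_prod_carrier gen_carrier L.m_assoc
        translation_prod_mult_inv)
qed

lemma normal_form_exists:
  assumes "X \<in> carrier (L_grp n)"
  shows "\<exists>\<mu> x. X = normal_form n \<mu> x"
proof -
  have "\<exists>\<mu> x. Lclass n w = normal_form n \<mu> x" if "w \<in> words n" for w
    using that
  proof (induction w rule: rev_induct)
    case Nil
    have "ordered_prod (L_grp n) (translation n) (\<lambda>_. 0) m = \<one>\<^bsub>L_grp n\<^esub>" for m
      by (induction m) auto
    then have "Lclass n [] = normal_form n (\<lambda>_. 0) False"
      by (simp add: normal_form_eq L_one[symmetric])
    then show ?case by blast
  next
    case (snoc a w)
    then have "w \<in> words n" "a < n" by (auto simp: words_def)
    with snoc.IH obtain \<mu> x where "Lclass n w = normal_form n \<mu> x" by blast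
    with \<open>w \<in> words n\<close> \<open>a < n\<close> show ?case
      by (metis Lclass_snoc normal_form_mult_gen)
  qed
  with assms show ?thesis by (auto simp: L_carrier)
qed

lemma L_to_sdp_translation:
  "j < n \<Longrightarrow> L_to_sdp (translation n j) = (\<lambda>i. ebasis j i - ebasis c i, False)"
  using last_lt
  by (simp add: translation_eq hom_mult[OF L_to_sdp_hom] gen_carrier L_to_sdp_gen sdp_mult act_def)

lemma L_to_sdp_normal_form: "L_to_sdp (normal_form n \<mu> x) = lift n \<mu> x"
proof -
  have "L_to_sdp (ordered_prod (L_grp n) (translation n) \<mu> c)
      = ordered_prod (sdp n) (L_to_sdp \<circ> translation n) \<mu> c"
    using last_lt
    by (intro ordered_prod_hom group_L group_sdp L_to_sdp_hom translation_carrier) simp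
  also have "\<dots> = (\<lambda>i. \<Sum>j<c. \<mu> j * (ebasis j i - ebasis c i), False)"
  proof (rule sdp_ordered_prod_translations)
    fix j assume "j < c"
    then have j: "j < n" using n_eq by simp
    show "(L_to_sdp \<circ> translation n) j = (\<lambda>i. ebasis j i - ebasis c i, False)"
      using L_to_sdp_translation[OF j] by simp
    show "(L_to_sdp \<circ> translation n) j \<in> carrier (sdp n)"
      using hom_in_carrier[OF L_to_sdp_hom translation_carrier[OF j]] by simp
  qed
  also have "\<dots> = (\<lambda>i. (if i < c then \<mu> i else 0) - (\<Sum>j<c. \<mu> j) * ebasis c i, False)"
    by (simp add: right_diff_distrib sum_subtractf sum_ebasis sum_distrib_right)
  finally have P: "L_to_sdp (ordered_prod (L_grp n) (translation n) \<mu> c) = \<dots>" .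
  have g: "L_to_sdp (if x then gen n c else \<one>\<^bsub>L_grp n\<^esub>) = (if x then (ebasis c, True) else \<one>\<^bsub>sdp n\<^esub>)"
    using last_lt by (simp add: L_to_sdp_gen hom_one[OF L_to_sdp_hom])
  show ?thesis
    using last_lt
    by (simp add: normal_form_eq hom_mult[OF L_to_sdp_hom] translation_prod_carrier
        gen_carrier P g sdp_mult sdp_one act_def lift_eq ebasis_def fun_eq_iff)
qed

lemma lift_mem: "lift n \<mu> x \<in> Lcirc n \<union> Ltau n"
proof -
  let ?l = "fst (lift n \<mu> x)"
  have "(\<Sum>i<n. ?l i) = (\<Sum>i<c. ?l i) + ?l c"
    using n_eq by simp
  also have "(\<Sum>i<c. ?l i) = (\<Sum>i<c. \<mu> i)"
    by (rule sum.cong) (simp_all add: lift_eq)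
  finally have "(\<Sum>i<n. ?l i) = of_bool x"
    by (simp add: lift_eq)
  moreover have "\<forall>i\<ge>n. ?l i = 0"
    using last_lt by (auto simp: lift_eq)
  ultimately show ?thesis
    by (cases x) (auto simp: Lcirc_def Ltau_def lift_eq)
qed

lemma lift_of_mem:
  assumes "(l, x) \<in> Lcirc n \<union> Ltau n"
  shows "lift n l x = (l, x)"
proof -
  have vanish: "\<forall>i\<ge>n. l i = 0" and "(\<Sum>i<n. l i) = of_bool x"
    using assms by (auto simp: Lcirc_def Ltau_def)
  then have "l c = of_bool x - (\<Sum>i<c. l i)"
    using n_eq by simp
  moreover have "i \<ge> n" if "\<not> i < c" "i \<noteq> c" for i
    using that n_eq by simp
  ultimately show ?thesis
    using vanish by (auto simp: lift_eq fun_eq_iff)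
qed

text \<open>The normal form is recovered from the image: forgetting the last coordinate of the image
  returns (mu, x) up to irrelevant values of mu beyond c.  This is the key to injectivity.\<close>

lemma normal_form_recover:
  assumes "X \<in> carrier (L_grp n)"
  shows "case_prod (normal_form n) (forget_last n (L_to_sdp X)) = X"
proof -
  obtain \<mu> x where X: "X = normal_form n \<mu> x"
    using normal_form_exists[OF assms] by blast
  have "forget_last n (L_to_sdp X) = (\<lambda>i. if i < c then \<mu> i else 0, x)"
    by (simp add: X L_to_sdp_normal_form forget_last_lift)
  moreover have "normal_form n (\<lambda>i. if i < c then \<mu> i else 0) x = normal_form n \<mu> x"
    by (simp add: normal_form_eq cong: ordered_prod_cong)
  ultimately show ?thesis
    by (simp add: X)
qed

lemma L_to_sdp_inj: "inj_on L_to_sdp (carrier (L_grp n))"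
  by (rule inj_on_inverseI[where g = "case_prod (normal_form n) \<circ> forget_last n"])
    (simp add: normal_form_recover)

lemma L_to_sdp_image: "L_to_sdp ` carrier (L_grp n) = Lcirc n \<union> Ltau n"
proof
  show "L_to_sdp ` carrier (L_grp n) \<subseteq> Lcirc n \<union> Ltau n"
    using normal_form_exists lift_mem L_to_sdp_normal_form by fastforce
  show "Lcirc n \<union> Ltau n \<subseteq> L_to_sdp ` carrier (L_grp n)"
  proof
    fix p assume p: "p \<in> Lcirc n \<union> Ltau n"
    obtain l x where lx: "p = (l, x)" by (cases p)
    then have "p = L_to_sdp (normal_form n l x)"
      using p lift_of_mem L_to_sdp_normal_form by simp
    then show "p \<in> L_to_sdp ` carrier (L_grp n)"
      using normal_form_carrier by blast
  qed
qed

lemma L_iso_sdp: "L_grp n \<cong> sdp c"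
proof -
  let ?h = "forget_last n \<circ> L_to_sdp"
  have hom: "?h \<in> hom (L_grp n) (sdp c)"
    using hom_compose[OF L_to_sdp_hom[of n] forget_last_hom[of n]] by (simp add: pred_eq)
  have inj: "inj_on ?h (carrier (L_grp n))"
    by (rule inj_on_inverseI[where g = "case_prod (normal_form n)"]) (simp add: normal_form_recover)
  have "carrier (sdp c) \<subseteq> ?h ` carrier (L_grp n)"
  proof
    fix p assume p: "p \<in> carrier (sdp c)"
    obtain l x where lx: "p = (l, x)" by (cases p)
    have "?h (normal_form n l x) = p"
      using p lx by (auto simp: L_to_sdp_normal_form forget_last_lift sdp_carrier fun_eq_iff)
    then show "p \<in> ?h ` carrier (L_grp n)"
      using normal_form_carrier by blast
  qed
  then have "bij_betw ?h (carrier (L_grp n)) (carrier (sdp c))"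
    using inj hom_carrier[OF hom] by (auto simp: bij_betw_def)
  then show ?thesis
    using hom by (blast intro: is_isoI isoI)
qed

end

theorem proposition6p1:
  fixes n :: nat
  assumes "n \<ge> 1"
  shows "group (L_grp n) \<and> group (sdp n) \<and>
    (\<exists>f. f \<in> hom (L_grp n) (sdp n) \<and>
         (\<forall>i<n. f (gen n i) = (ebasis i, True)) \<and>
         inj_on f (carrier (L_grp n)) \<and>
         f ` carrier (L_grp n) = Lcirc n \<union> Ltau n) \<and>
    L_grp n \<cong> sdp (n - 1)"
proof -
  obtain c where n_eq: "n = Suc c"
    using assms by (cases n) auto
  then have "n - 1 = c" by simp
  with n_eq show ?thesis
    using group_L group_sdp L_to_sdp_hom L_to_sdp_gen L_to_sdp_inj[OF n_eq]
      L_to_sdp_image[OF n_eq] L_iso_sdp[OF n_eq] by auto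
qed

end
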